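(* Let $Z,V,Y$ be random variables and $f:\mathbb{R}\times\mathcal{V}\to\mathbb{R}$ a measurable function such that: (i) $f(z,v)$ is non-increasing in $z$ for every $v$; (ii) $Z$ and $V$ are conditionally independent given $Y$; (iii) $\mathbb{E}(Z\mid Y)=\mathbb{E}(Z)$ almost surely. Assume $Z$, $f(Z,V)$, $Zf(Z,V)$ and $f(\mathbb{E}Z,V)$ are integrable (and $Zf(\mathbb{E}Z,V)$ integrable). Then $$\mathbb{E}[Z f(Z,V)]\le \mathbb{E}(Z)\,\mathbb{E}[f(Z,V)].$$ *)

theory Defs
  imports "HOL-Probability.Probability"
begin

definition cond_indep_given ::
  "'a measure \<Rightarrow> 'x measure \<Rightarrow> 'w measure \<Rightarrow> 'y measure \<Rightarrow>
   ('a \<Rightarrow> 'x) \<Rightarrow> ('a \<Rightarrow> 'w) \<Rightarrow> ('a \<Rightarrow> 'y) \<Rightarrow> bool" where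
  "cond_indep_given M MX MW MY X W Y \<longleftrightarrow>
    (\<forall>A\<in>sets MX. \<forall>B\<in>sets MW.
       AE x in M.
         real_cond_exp M (vimage_algebra (space M) Y MY)
           (\<lambda>\<omega>. indicator A (X \<omega>) * indicator B (W \<omega>)) x
       = real_cond_exp M (vimage_algebra (space M) Y MY) (\<lambda>\<omega>. indicator A (X \<omega>)) x *
         real_cond_exp M (vimage_algebra (space M) Y MY) (\<lambda>\<omega>. indicator B (W \<omega>)) x)"

end

theory Submission imports Defs begin

text \<open>Writing \<open>m = E Z\<close>, monotonicity gives the pointwise inequality
  \<open>(Z - m) (f(Z,V) - f(m,V)) \<le> 0\<close>, so it suffices to show \<open>E[Z h(V)] = m E[h(V)]\<close> for
  \<open>h = f(m,-)\<close>. Conditional independence together with \<open>E(Z|Y) = m\<close> yields this for indicators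
  \<open>h = 1\<^sub>B\<close>: both \<open>1\<^sub>B(V)\<close> and its conditional expectation \<open>b\<close> given \<open>Y\<close> integrate every
  \<open>1\<^sub>A(Z)\<close> alike, hence (as densities pushed forward by \<open>Z\<close>) they integrate \<open>Z\<close> alike, and
  \<open>E[b Z] = E[b E(Z|Y)] = m E[b]\<close>. Splitting \<open>Z - m\<close> into positive and negative parts and again
  comparing the measures they induce through \<open>V\<close> extends the identity from indicators to \<open>h\<close>.\<close>

lemma integrable_mult_bounded:
  fixes g c :: "'a \<Rightarrow> real"
  assumes "integrable M g" "c \<in> borel_measurable M" "AE x in M. \<bar>c x\<bar> \<le> C"
  shows "integrable M (\<lambda>x. g x * c x)"
proof (rule Bochner_Integration.integrable_bound)
  show "integrable M (\<lambda>x. C * g x)"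
    using assms(1) by simp
  show "(\<lambda>x. g x * c x) \<in> borel_measurable M"
    using assms(1,2) borel_measurable_integrable by measurable
  show "AE x in M. norm (g x * c x) \<le> norm (C * g x)"
    using assms(3) by eventually_elim (auto simp: abs_mult mult.commute intro: mult_right_mono)
qed

lemma integral_mult_comp_eq_by_indicators:
  fixes g1 g2 :: "'a \<Rightarrow> real" and \<phi> :: "'b \<Rightarrow> real"
  assumes g1: "integrable M g1" "AE x in M. 0 \<le> g1 x"
    and g2: "integrable M g2" "AE x in M. 0 \<le> g2 x"
    and [measurable]: "T \<in> measurable M S" "\<phi> \<in> borel_measurable S"
    and eq: "\<And>A. A \<in> sets S \<Longrightarrow>
      (\<integral>x. g1 x * indicator A (T x) \<partial>M) = (\<integral>x. g2 x * indicator A (T x) \<partial>M)"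
  shows "(\<integral>x. g1 x * \<phi> (T x) \<partial>M) = (\<integral>x. g2 x * \<phi> (T x) \<partial>M)"
proof -
  have emeasure_distr_density:
    "emeasure (distr (density M g) S T) A = ennreal (\<integral>x. g x * indicator A (T x) \<partial>M)"
    if A: "A \<in> sets S" and g: "integrable M g" "AE x in M. 0 \<le> g x" for g A
  proof -
    have [measurable]: "g \<in> borel_measurable M"
      using g(1) by (rule borel_measurable_integrable)
    have "emeasure (distr (density M g) S T) A = emeasure (density M g) (T -` A \<inter> space M)"
      using A by (simp add: emeasure_distr)
    also have "\<dots> = (\<integral>\<^sup>+x. ennreal (g x * indicator A (T x)) \<partial>M)"
      using A by (auto simp: emeasure_density indicator_def intro!: nn_integral_cong)
    also have "\<dots> = ennreal (\<integral>x. g x * indicator A (T x) \<partial>M)"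
      using g A
      by (intro nn_integral_eq_integral integrable_mult_bounded[where C = 1])
        (auto simp: indicator_def)
    finally show ?thesis .
  qed
  have "distr (density M g1) S T = distr (density M g2) S T"
    by (rule measure_eqI) (simp_all add: emeasure_distr_density g1 g2 eq)
  then have "integral\<^sup>L (distr (density M g1) S T) \<phi> = integral\<^sup>L (distr (density M g2) S T) \<phi>"
    by simp
  with g1 g2 show ?thesis
    by (simp add: integral_distr integral_density borel_measurable_integrable)
qed

lemma integral_mult_comp_eq_0_by_indicators:
  fixes W :: "'a \<Rightarrow> real" and h :: "'b \<Rightarrow> real"
  assumes W: "integrable M W" and [measurable]: "T \<in> measurable M S" "h \<in> borel_measurable S"
    and Wh: "integrable M (\<lambda>x. W x * h (T x))"
    and orth: "\<And>B. B \<in> sets S \<Longrightarrow> (\<integral>x. W x * indicator B (T x) \<partial>M) = 0"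
  shows "(\<integral>x. W x * h (T x) \<partial>M) = 0"
proof -
  define Wp where "Wp x = max (W x) 0" for x
  define Wn where "Wn x = max (- W x) 0" for x
  have [measurable]: "W \<in> borel_measurable M"
    using W by (rule borel_measurable_integrable)
  have W_split: "W x = Wp x - Wn x" for x
    by (simp add: Wp_def Wn_def)
  have Wp: "integrable M Wp" and Wn: "integrable M Wn"
    unfolding Wp_def Wn_def using W by auto
  have part_h_integrable: "integrable M (\<lambda>x. P x * h (T x))"
    if "P \<in> borel_measurable M" "\<And>x. \<bar>P x\<bar> \<le> \<bar>W x\<bar>" for P
    using that by (intro Bochner_Integration.integrable_bound[OF Wh]) (auto simp: abs_mult mult_right_mono)
  have Wp_h: "integrable M (\<lambda>x. Wp x * h (T x))" and Wn_h: "integrable M (\<lambda>x. Wn x * h (T x))"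
    by (rule part_h_integrable; simp add: Wp_def Wn_def)+
  have "(\<integral>x. Wp x * h (T x) \<partial>M) = (\<integral>x. Wn x * h (T x) \<partial>M)"
  proof (rule integral_mult_comp_eq_by_indicators[where S = S])
    fix B assume B: "B \<in> sets S"
    have "integrable M (\<lambda>x. P x * indicator B (T x))" if "integrable M P" for P :: "'a \<Rightarrow> real"
      using that by (rule integrable_mult_bounded[where C = 1]) (use B in auto)
    with Wp Wn orth[OF B] show
      "(\<integral>x. Wp x * indicator B (T x) \<partial>M) = (\<integral>x. Wn x * indicator B (T x) \<partial>M)"
      by (simp add: W_split left_diff_distrib)
  qed (use W in \<open>auto simp: Wp_def Wn_def\<close>)
  with Wp_h Wn_h show ?thesis
    by (simp add: W_split left_diff_distrib)
qed

lemma subalgebra_vimage_algebra: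
  "Y \<in> measurable M K \<Longrightarrow> subalgebra M (vimage_algebra (space M) Y K)"
  unfolding subalgebra_def by (auto simp: measurable_iff_sets)

lemma antimono_mult_diff_nonneg:
  fixes g :: "'a::linordered_ring \<Rightarrow> 'a"
  assumes "antimono g"
  shows "0 \<le> (z - m) * (g m - g z)"
proof (cases "z \<le> m")
  case True
  then show ?thesis
    using antimonoD[OF assms True] by (simp add: mult_nonpos_nonpos)
next
  case False
  then show ?thesis
    using antimonoD[OF assms, of m z] by (simp add: mult_nonneg_nonneg)
qed

lemma (in finite_measure_subalgebra) real_cond_exp_unit_interval:
  assumes "integrable M f" "\<And>x. 0 \<le> f x" "\<And>x. f x \<le> 1"
  shows "integrable M (real_cond_exp M F f)" "AE x in M. 0 \<le> real_cond_exp M F f x"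
    "AE x in M. \<bar>real_cond_exp M F f x\<bar> \<le> 1"
proof -
  show "integrable M (real_cond_exp M F f)"
    using assms(1) by (rule real_cond_exp_int(1))
  have "AE x in M. 0 \<le> real_cond_exp M F f x" "AE x in M. real_cond_exp M F f x \<le> 1"
    using assms by (auto intro!: real_cond_exp_pos real_cond_exp_le_c borel_measurable_integrable)
  then show "AE x in M. 0 \<le> real_cond_exp M F f x" "AE x in M. \<bar>real_cond_exp M F f x\<bar> \<le> 1"
    by (auto elim: eventually_mono)
qed

lemma (in prob_space) cond_indep_given_integral_mult_cond_exp_indicator:
  fixes X :: "'a \<Rightarrow> real" and Y :: "'a \<Rightarrow> 'y" and K :: "'y measure"
  defines "F \<equiv> vimage_algebra (space M) Y K"
  assumes [measurable]: "X \<in> borel_measurable M" "V \<in> measurable M N"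
    and Y: "Y \<in> measurable M K"
    and ci: "cond_indep_given M borel N K X V Y"
    and B[measurable]: "B \<in> sets N"
  shows "(\<integral>x. X x * indicator B (V x) \<partial>M)
    = (\<integral>x. X x * real_cond_exp M F (\<lambda>x. indicator B (V x)) x \<partial>M)"
proof -
  interpret finite_measure_subalgebra M F
    by unfold_locales (use Y in \<open>simp add: F_def subalgebra_vimage_algebra\<close>)
  define b where "b = real_cond_exp M F (\<lambda>x. indicator B (V x))"
  have [measurable]: "b \<in> borel_measurable F" "b \<in> borel_measurable M"
    by (simp_all add: b_def)
  have ind_V: "integrable M (\<lambda>x. indicator B (V x) :: real)"
    by (intro integrable_const_bound[where B = 1]) auto
  have ind_X: "integrable M (\<lambda>x. indicator A (X x) :: real)" if "A \<in> sets borel" for A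
    using that by (intro integrable_const_bound[where B = 1]) auto
  have b: "integrable M b" "AE x in M. 0 \<le> b x" "AE x in M. \<bar>b x\<bar> \<le> 1"
    unfolding b_def by (rule real_cond_exp_unit_interval[OF ind_V]; simp)+
  have "(\<integral>x. indicator B (V x) * X x \<partial>M) = (\<integral>x. b x * X x \<partial>M)"
  proof (rule integral_mult_comp_eq_by_indicators[where S = borel and \<phi> = id, simplified])
    fix A :: "real set" assume A: "A \<in> sets borel"
    have "(\<integral>x. b x * indicator A (X x) \<partial>M)
        = (\<integral>x. b x * real_cond_exp M F (\<lambda>x. indicator A (X x)) x \<partial>M)"
      using A b by (intro real_cond_exp_intg(2)[symmetric] integrable_mult_bounded[where C = 1])
        auto
    also have "\<dots> = (\<integral>x. real_cond_exp M F (\<lambda>x. indicator A (X x) * indicator B (V x)) x \<partial>M)"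
    proof (rule integral_cong_AE)
      show "AE x in M. b x * real_cond_exp M F (\<lambda>x. indicator A (X x)) x
          = real_cond_exp M F (\<lambda>x. indicator A (X x) * indicator B (V x)) x"
        using ci A B unfolding cond_indep_given_def F_def b_def
        by (fastforce elim: eventually_mono)
    qed simp_all
    also have "\<dots> = (\<integral>x. indicator A (X x) * indicator B (V x) \<partial>M)"
      using ind_X[OF A] by (intro real_cond_exp_int(2) integrable_mult_bounded[where C = 1]) auto
    finally show "(\<integral>x. indicator B (V x) * indicator A (X x) \<partial>M)
        = (\<integral>x. b x * indicator A (X x) \<partial>M)"
      by (simp add: mult.commute)
  qed (use ind_V b in auto)
  then show ?thesis
    by (simp add: b_def mult.commute)
qed

lemma (in prob_space) cond_indep_given_integral_mult_indicator:
  fixes Z :: "'a \<Rightarrow> real" and Y :: "'a \<Rightarrow> 'y" and K :: "'y measure"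
  assumes Z: "integrable M Z" and [measurable]: "V \<in> measurable M N"
    and Y: "Y \<in> measurable M K"
    and ci: "cond_indep_given M borel N K Z V Y"
    and ce: "AE x in M. real_cond_exp M (vimage_algebra (space M) Y K) Z x = integral\<^sup>L M Z"
    and B[measurable]: "B \<in> sets N"
  shows "(\<integral>x. Z x * indicator B (V x) \<partial>M) = integral\<^sup>L M Z * (\<integral>x. indicator B (V x) \<partial>M)"
proof -
  define F where "F = vimage_algebra (space M) Y K"
  interpret finite_measure_subalgebra M F
    by unfold_locales (use Y in \<open>simp add: F_def subalgebra_vimage_algebra\<close>)
  define b where "b = real_cond_exp M F (\<lambda>x. indicator B (V x))"
  have [measurable]: "Z \<in> borel_measurable M"
    using Z by (rule borel_measurable_integrable)
  have ind_V: "integrable M (\<lambda>x. indicator B (V x) :: real)"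
    by (intro integrable_const_bound[where B = 1]) auto
  have [measurable]: "b \<in> borel_measurable F" "b \<in> borel_measurable M"
    by (simp_all add: b_def)
  have ceF: "AE x in M. real_cond_exp M F Z x = integral\<^sup>L M Z"
    using ce by (simp add: F_def)
  have b_Z: "integrable M (\<lambda>x. Z x * b x)"
    unfolding b_def using Z real_cond_exp_unit_interval(3)[OF ind_V]
    by (intro integrable_mult_bounded) auto
  have "(\<integral>x. Z x * indicator B (V x) \<partial>M) = (\<integral>x. Z x * b x \<partial>M)"
    unfolding b_def F_def using ci Y by (intro cond_indep_given_integral_mult_cond_exp_indicator) auto
  also have "\<dots> = (\<integral>x. b x * real_cond_exp M F Z x \<partial>M)"
    using real_cond_exp_intg(2)[of b Z] b_Z Z by (simp add: ac_simps)
  also have "\<dots> = (\<integral>x. b x * integral\<^sup>L M Z \<partial>M)"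
    using ceF by (intro integral_cong_AE) (auto elim: eventually_mono)
  also have "\<dots> = integral\<^sup>L M Z * (\<integral>x. indicator B (V x) \<partial>M)"
    using real_cond_exp_int(2)[OF ind_V] by (simp add: b_def mult.commute)
  finally show ?thesis .
qed

lemma (in prob_space) cond_indep_given_integral_mult_comp:
  fixes Z :: "'a \<Rightarrow> real" and h :: "'v \<Rightarrow> real"
  assumes Z: "integrable M Z" and V: "V \<in> measurable M N" and h: "h \<in> borel_measurable N"
    and Y: "Y \<in> measurable M K"
    and ci: "cond_indep_given M borel N K Z V Y"
    and ce: "AE x in M. real_cond_exp M (vimage_algebra (space M) Y K) Z x = integral\<^sup>L M Z"
    and hV: "integrable M (\<lambda>x. h (V x))" and ZhV: "integrable M (\<lambda>x. Z x * h (V x))"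
  shows "(\<integral>x. Z x * h (V x) \<partial>M) = integral\<^sup>L M Z * (\<integral>x. h (V x) \<partial>M)"
proof -
  have "(\<integral>x. (Z x - integral\<^sup>L M Z) * h (V x) \<partial>M) = 0"
  proof (rule integral_mult_comp_eq_0_by_indicators[OF _ V h])
    fix B assume B: "B \<in> sets N"
    have "integrable M (\<lambda>x. P x * indicator B (V x))" if "integrable M P" for P :: "'a \<Rightarrow> real"
      using that V B by (intro integrable_mult_bounded[where C = 1]) auto
    from this[OF Z] this[of "\<lambda>_. 1"]
      cond_indep_given_integral_mult_indicator[OF Z V Y ci ce B]
    show "(\<integral>x. (Z x - integral\<^sup>L M Z) * indicator B (V x) \<partial>M) = 0"
      by (simp add: left_diff_distrib)
  qed (use Z hV ZhV in \<open>simp_all add: left_diff_distrib\<close>)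
  with hV ZhV show ?thesis
    by (simp add: left_diff_distrib)
qed

theorem mainTheorem7:
  fixes M :: "'a measure" and N :: "'v measure" and K :: "'y measure"
    and Z :: "'a \<Rightarrow> real" and V :: "'a \<Rightarrow> 'v" and Y :: "'a \<Rightarrow> 'y"
    and f :: "real \<Rightarrow> 'v \<Rightarrow> real"
  assumes P: "prob_space M"
    and Zm: "Z \<in> borel_measurable M"
    and Vm: "V \<in> measurable M N"
    and Ym: "Y \<in> measurable M K"
    and fm: "(\<lambda>(z, v). f z v) \<in> borel_measurable (borel \<Otimes>\<^sub>M N)"
    and mono: "\<And>v. v \<in> space N \<Longrightarrow> antimono (\<lambda>z. f z v)"
    and ci: "cond_indep_given M borel N K Z V Y"
    and ce: "AE x in M. real_cond_exp M (vimage_algebra (space M) Y K) Z x = integral\<^sup>L M Z"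
    and i1: "integrable M Z"
    and i2: "integrable M (\<lambda>x. f (Z x) (V x))"
    and i3: "integrable M (\<lambda>x. Z x * f (Z x) (V x))"
    and i4: "integrable M (\<lambda>x. f (integral\<^sup>L M Z) (V x))"
    and i5: "integrable M (\<lambda>x. Z x * f (integral\<^sup>L M Z) (V x))"
  shows "integral\<^sup>L M (\<lambda>x. Z x * f (Z x) (V x))
           \<le> integral\<^sup>L M Z * integral\<^sup>L M (\<lambda>x. f (Z x) (V x))"
proof -
  interpret prob_space M by (rule P)
  define m where "m = integral\<^sup>L M Z"
  have "(\<lambda>v. f m v) \<in> borel_measurable N"
    using measurable_compose[OF measurable_Pair1'[of m borel N] fm] by simp
  then have mean_indep: "(\<integral>x. Z x * f m (V x) \<partial>M) = m * (\<integral>x. f m (V x) \<partial>M)"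
    using i4 i5 unfolding m_def
    by (intro cond_indep_given_integral_mult_comp[OF i1 Vm _ Ym ci ce])
  have "0 \<le> (\<integral>x. (Z x - m) * (f m (V x) - f (Z x) (V x)) \<partial>M)"
    by (intro integral_nonneg_AE AE_I2 antimono_mult_diff_nonneg mono measurable_space[OF Vm])
  with i2 i3 i4 i5 mean_indep show ?thesis
    by (simp add: m_def algebra_simps)
qed

end
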